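(* Let $\mathcal F\subseteq[\mathbb R^p\to\mathbb R^d]$ and let $\Pi_{\mathcal F}=\{\pi_f:f\in\mathcal F\}$ be the induced class of plug-in policies. Then the Natarajan dimension of $\Pi_{\mathcal F}$ is at most the VC-linear-subgraph dimension of $\mathcal F$.
   Context: $\mathcal Z=\{z\in\mathbb R^d:Az\le b\}$ is a bounded polytope with finite set of extreme points $\mathcal Z^\angle$. For $f:\mathbb R^p\to\mathbb R^d$, the plug-in policy $\pi_f$ is defined by $\pi_f(x)\in\arg\min_{z\in\mathcal Z}f(x)^\top z$, where $\pi_f(x)$ is always chosen in $\mathcal Z^\angle$, with ties broken by a fixed ordering of $\mathcal Z^\angle$ (the same ordering for all $f$ and $x$). The VC-linear-subgraph dimension of $\mathcal F$ is the largest integer $\nu$ for which there exist $x_1,\dots,x_\nu\in\mathbb R^p$, $\beta_1,\dots,\beta_\nu\in\mathbb R^d$, $t_1,\dots,t_\nu\in\mathbb R$ such that $\{(\mathbb I\{\beta_1^\top f(x_1)\le t_1\},\dots,\mathbb I\{\beta_\nu^\top f(x_\nu)\le t_\nu\}):f\in\mathcal F\}=\{0,1\}^\nu$. The Natarajan dimension of a class $\mathcal G\subseteq[\mathbb R^p\to\mathcal S]$ is the largest integer $\eta$ for which there exist $x_1,\dots,x_\eta\in\mathbb R^p$ and $s_1\neq s_1',\dots,s_\eta\neq s_\eta'\in\mathcal S$ such that $\{(\mathbb I\{g(x_1)=s_1\},\dots,\mathbb I\{g(x_\eta)=s_\eta\}):g\in\mathcal G,\ g(x_k)\in\{s_k,s_k'\}\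 \forall k\}=\{0,1\}^\eta$. *)

theory Defs
  imports "HOL-Analysis.Analysis"
begin

definition polytope_set :: "real^'d^'m \<Rightarrow> real^'m \<Rightarrow> (real^'d) set" where
  "polytope_set A b = {z. \<forall>i. (A *v z) $ i \<le> b $ i}"

text \<open>Plug-in policy: the first extreme point (in the fixed ordering given by the
  list zs enumerating the extreme points) minimising f(x)^T z over Z.\<close>
definition plugin_policy ::
  "(real^'d) set \<Rightarrow> (real^'d) list \<Rightarrow> ('p \<Rightarrow> real^'d) \<Rightarrow> 'p \<Rightarrow> real^'d" where
  "plugin_policy Z zs f x = hd (filter (\<lambda>z. \<forall>w\<in>Z. f x \<bullet> z \<le> f x \<bullet> w) zs)"

definition natarajan_shatters :: "('a \<Rightarrow> 's) set \<Rightarrow> nat \<Rightarrow> bool" where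
  "natarajan_shatters G n \<longleftrightarrow>
     (\<exists>(xs::nat \<Rightarrow> 'a) (s::nat \<Rightarrow> 's) (s'::nat \<Rightarrow> 's).
        (\<forall>k<n. s k \<noteq> s' k) \<and>
        {map (\<lambda>k. g (xs k) = s k) [0..<n] | g. g \<in> G \<and> (\<forall>k<n. g (xs k) \<in> {s k, s' k})}
          = {bs. length bs = n})"

definition natarajan_dim :: "('a \<Rightarrow> 's) set \<Rightarrow> enat" where
  "natarajan_dim G = Sup {enat n | n. natarajan_shatters G n}"

definition vc_ls_shatters :: "('a \<Rightarrow> 'b::real_inner) set \<Rightarrow> nat \<Rightarrow> bool" where
  "vc_ls_shatters F n \<longleftrightarrow>
     (\<exists>(xs::nat \<Rightarrow> 'a) (\<beta>::nat \<Rightarrow> 'b) (t::nat \<Rightarrow> real).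
        {map (\<lambda>k. \<beta> k \<bullet> f (xs k) \<le> t k) [0..<n] | f. f \<in> F} = {bs. length bs = n})"

definition vc_ls_dim :: "('a \<Rightarrow> 'b::real_inner) set \<Rightarrow> enat" where
  "vc_ls_dim F = Sup {enat n | n. vc_ls_shatters F n}"

end

theory Submission
  imports Defs
begin

(* By Krein-Milman, f(x) . z is minimised over a nonempty bounded polytope Z at one of its finitely
   many extreme points, so every plug-in policy takes values in the list zs. Suppose the policies
   Natarajan-shatter x_1, ..., x_n with label pairs s_k ~= s'_k, and order each pair as (u_k, v_k)
   by position in zs. Whenever the policy at x_k picks u_k or v_k, it picks u_k exactly when
   f(x_k) . u_k <= f(x_k) . v_k, i.e. when (u_k - v_k) . f(x_k) <= 0. Up to a fixed flip of the
   labels, every pattern realised by the policies is therefore realised by these linear tests,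
   so F VC-linear-subgraph shatters the same n points. *)

definition precedes :: "'a list \<Rightarrow> 'a \<Rightarrow> 'a \<Rightarrow> bool" where
  "precedes zs u v \<longleftrightarrow> u \<in> set (takeWhile (\<lambda>z. z \<noteq> v) zs)"

lemma precedes_total:
  assumes "u \<in> set zs" "v \<in> set zs" "u \<noteq> v"
  shows "precedes zs u v \<or> precedes zs v u"
proof -
  obtain us vs where zs: "zs = us @ v # vs" "v \<notin> set us"
    using split_list_first[OF assms(2)] by auto
  show ?thesis
  proof (cases "u \<in> set us")
    case True
    then show ?thesis unfolding precedes_def zs using zs(2) by (subst takeWhile_append2) auto
  next
    case False
    then have "takeWhile (\<lambda>z. z \<noteq> u) zs = us @ v # takeWhile (\<lambda>z. z \<noteq> u) vs"
      unfolding zs using assms(3) by (subst takeWhile_append2) auto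
    then show ?thesis unfolding precedes_def by auto
  qed
qed

lemma hd_filter_eq_iff_if_precedes:
  assumes "precedes zs u v" "hd (filter P zs) \<in> {u, v}" "\<exists>z\<in>set zs. P z"
  shows "hd (filter P zs) = u \<longleftrightarrow> P u"
proof -
  obtain y ys where y: "filter P zs = y # ys"
    using assms(3) by (cases "filter P zs") (auto simp: filter_empty_conv)
  then obtain us vs where zs: "zs = us @ y # vs" "\<forall>w\<in>set us. \<not> P w" "P y"
    unfolding filter_eq_Cons_iff by blast
  show ?thesis
  proof (cases "y = u")
    case False
    with assms(2) y have "y = v" by simp
    with zs have "v \<notin> set us" by blast
    then have "takeWhile (\<lambda>z. z \<noteq> v) zs = us"
      unfolding zs(1) \<open>y = v\<close> by (subst takeWhile_append2) auto
    with assms(1) zs(2) y False show ?thesis unfolding precedes_def by auto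
  qed (use y zs in simp)
qed

lemma closed_polytope_set: "closed (polytope_set A b)"
  and convex_polytope_set: "convex (polytope_set A b)"
proof -
  have Z: "polytope_set A b = (\<Inter>i. {z. A $ i \<bullet> z \<le> b $ i})"
    unfolding polytope_set_def by (auto simp: matrix_vector_mul_component)
  show "closed (polytope_set A b)" unfolding Z by (intro closed_INT ballI closed_halfspace_le)
  show "convex (polytope_set A b)" unfolding Z by (intro convex_INT ballI convex_halfspace_le)
qed

lemma exists_extreme_point_minimizing_inner:
  fixes Z :: "'a::euclidean_space set"
  assumes "compact Z" "convex Z" "finite {z. z extreme_point_of Z}" "Z \<noteq> {}"
  shows "\<exists>e. e extreme_point_of Z \<and> (\<forall>w\<in>Z. c \<bullet> e \<le> c \<bullet> w)"
proof -
  let ?E = "{z. z extreme_point_of Z}"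
  have "?E \<noteq> {}" using extreme_point_exists_convex[OF assms(1,2,4)] by blast
  then obtain e where e: "e \<in> ?E" "c \<bullet> e = Min ((\<bullet>) c ` ?E)"
    using Min_in[of "(\<bullet>) c ` ?E"] assms(3) by fastforce
  have "?E \<subseteq> {w. c \<bullet> e \<le> c \<bullet> w}" using e(2) assms(3) by auto
  then have "convex hull ?E \<subseteq> {w. c \<bullet> e \<le> c \<bullet> w}"
    by (intro hull_minimal convex_halfspace_ge)
  then show ?thesis using e(1) Krein_Milman_Minkowski[OF assms(1,2)] by auto
qed

lemma plugin_policy_minimizes:
  fixes Z :: "(real^'d) set"
  assumes "compact Z" "convex Z" "finite {z. z extreme_point_of Z}"
    and "set zs = {z. z extreme_point_of Z}" "zs \<noteq> []"
  shows "plugin_policy Z zs f x \<in> set zs"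
    and "\<forall>w\<in>Z. f x \<bullet> plugin_policy Z zs f x \<le> f x \<bullet> w"
proof -
  let ?S = "filter (\<lambda>z. \<forall>w\<in>Z. f x \<bullet> z \<le> f x \<bullet> w) zs"
  have "Z \<noteq> {}" using assms(4,5) extreme_point_of_def by fastforce
  then have "?S \<noteq> []"
    using exists_extreme_point_minimizing_inner[OF assms(1-3)] assms(4) by (auto simp: filter_empty_conv)
  then have "hd ?S \<in> set ?S" by (rule hd_in_set)
  then show "plugin_policy Z zs f x \<in> set zs"
    and "\<forall>w\<in>Z. f x \<bullet> plugin_policy Z zs f x \<le> f x \<bullet> w"
    unfolding plugin_policy_def by auto
qed

lemma plugin_policy_mem_if_nonconstant:
  fixes Z :: "(real^'d) set"
  assumes "compact Z" "convex Z" "finite {z. z extreme_point_of Z}"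
    and "set zs = {z. z extreme_point_of Z}"
    and "plugin_policy Z zs g x \<noteq> plugin_policy Z zs h x"
  shows "plugin_policy Z zs f x \<in> set zs"
proof -
  have "zs \<noteq> []" using assms(5) by (auto simp: plugin_policy_def)
  then show ?thesis by (rule plugin_policy_minimizes(1)[OF assms(1-4)])
qed

lemma plugin_policy_eq_iff_if_precedes:
  fixes Z :: "(real^'d) set"
  assumes "compact Z" "convex Z" "finite {z. z extreme_point_of Z}"
    and "set zs = {z. z extreme_point_of Z}"
    and "precedes zs u v" "v \<in> set zs" "plugin_policy Z zs f x \<in> {u, v}"
  shows "plugin_policy Z zs f x = u \<longleftrightarrow> f x \<bullet> u \<le> f x \<bullet> v"
proof -
  let ?P = "\<lambda>z. \<forall>w\<in>Z. f x \<bullet> z \<le> f x \<bullet> w"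
  have "zs \<noteq> []" using assms(6) by auto
  note minimizes = plugin_policy_minimizes[OF assms(1-4) this]
  have "v \<in> Z" using assms(4,6) extreme_point_of_def by blast
  have eq_iff_minimizer: "plugin_policy Z zs f x = u \<longleftrightarrow> ?P u"
    using hd_filter_eq_iff_if_precedes[OF assms(5), of ?P] assms(7) minimizes[of f x]
    unfolding plugin_policy_def by blast
  show ?thesis
  proof
    assume "plugin_policy Z zs f x = u"
    then show "f x \<bullet> u \<le> f x \<bullet> v" using eq_iff_minimizer \<open>v \<in> Z\<close> by blast
  next
    assume "f x \<bullet> u \<le> f x \<bullet> v"
    then have "plugin_policy Z zs f x = v \<Longrightarrow> ?P u" using minimizes(2)[of f x] order_trans by metis
    then show "plugin_policy Z zs f x = u" using eq_iff_minimizer assms(7) by blast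
  qed
qed

lemma plugin_policy_pair_halfspace:
  fixes Z :: "(real^'d) set"
  assumes "compact Z" "convex Z" "finite {z. z extreme_point_of Z}"
    and "set zs = {z. z extreme_point_of Z}"
    and "s \<in> set zs" "s' \<in> set zs" "s \<noteq> s'"
  shows "\<exists>\<beta> c. \<forall>f. plugin_policy Z zs f x \<in> {s, s'} \<longrightarrow>
    (\<beta> \<bullet> f x \<le> 0 \<longleftrightarrow> (plugin_policy Z zs f x = s) \<noteq> c)"
  using precedes_total[OF assms(5-7)]
proof
  assume "precedes zs s s'"
  note eq_iff = plugin_policy_eq_iff_if_precedes[OF assms(1-4) this assms(6)]
  have "plugin_policy Z zs f x \<in> {s, s'} \<longrightarrow>
      ((s - s') \<bullet> f x \<le> 0 \<longleftrightarrow> (plugin_policy Z zs f x = s) \<noteq> False)" for f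
    using eq_iff[of f x] by (auto simp: inner_commute[of "s - s'"] inner_diff_right)
  then show ?thesis by blast
next
  assume "precedes zs s' s"
  note eq_iff = plugin_policy_eq_iff_if_precedes[OF assms(1-4) this assms(5)]
  have "plugin_policy Z zs f x \<in> {s, s'} \<longrightarrow>
      ((s' - s) \<bullet> f x \<le> 0 \<longleftrightarrow> (plugin_policy Z zs f x = s) \<noteq> True)" for f
    using eq_iff[of f x] assms(7) by (auto simp: inner_commute[of "s' - s"] inner_diff_right)
  then show ?thesis by blast
qed

lemma vc_ls_shatters_if_natarajan_shatters:
  fixes \<pi> :: "('a \<Rightarrow> 'b::real_inner) \<Rightarrow> 'a \<Rightarrow> 's"
  assumes shatters: "natarajan_shatters (\<pi> ` F) n"
    and halfspace_test: "\<And>x s s'. s \<in> (\<lambda>f. \<pi> f x) ` F \<Longrightarrow> s' \<in> (\<lambda>f. \<pi> f x) ` F \<Longrightarrow> s \<noteq> s' \<Longrightarrow>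
      \<exists>\<beta> c. \<forall>f. \<pi> f x \<in> {s, s'} \<longrightarrow> (\<beta> \<bullet> f x \<le> 0 \<longleftrightarrow> (\<pi> f x = s) \<noteq> c)"
  shows "vc_ls_shatters F n"
proof -
  obtain xs s s' where distinct_labels: "\<forall>k<n. s k \<noteq> s' k"
    and patterns: "{map (\<lambda>k. g (xs k) = s k) [0..<n] | g. g \<in> \<pi> ` F \<and> (\<forall>k<n. g (xs k) \<in> {s k, s' k})}
      = {bs. length bs = n}"
    using shatters unfolding natarajan_shatters_def by (elim exE conjE) (rule that)
  have realise: "\<exists>f\<in>F. (\<forall>k<n. \<pi> f (xs k) \<in> {s k, s' k} \<and> (\<pi> f (xs k) = s k) = bs ! k)"
    if "length bs = n" for bs
  proof -
    from that patterns obtain g where "bs = map (\<lambda>k. g (xs k) = s k) [0..<n]"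
      "g \<in> \<pi> ` F" "\<forall>k<n. g (xs k) \<in> {s k, s' k}"
      by blast
    then show ?thesis by auto
  qed
  have attained: "s k \<in> (\<lambda>f. \<pi> f (xs k)) ` F" "s' k \<in> (\<lambda>f. \<pi> f (xs k)) ` F"
    if "k < n" for k
  proof -
    obtain f where "f \<in> F" "\<pi> f (xs k) = s k"
      using realise[of "replicate n True"] \<open>k < n\<close> by auto
    then show "s k \<in> (\<lambda>f. \<pi> f (xs k)) ` F" by force
    obtain f where "f \<in> F" "\<pi> f (xs k) = s' k"
      using realise[of "replicate n False"] \<open>k < n\<close> by auto
    then show "s' k \<in> (\<lambda>f. \<pi> f (xs k)) ` F" by force
  qed
  have "\<exists>\<beta> c. \<forall>f. \<pi> f (xs k) \<in> {s k, s' k} \<longrightarrow>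
      (\<beta> \<bullet> f (xs k) \<le> 0 \<longleftrightarrow> (\<pi> f (xs k) = s k) \<noteq> c)" if "k < n" for k
    using halfspace_test[OF attained[OF that] distinct_labels[rule_format, OF that]] .
  then obtain \<beta> c where test: "\<And>k f. k < n \<Longrightarrow> \<pi> f (xs k) \<in> {s k, s' k} \<Longrightarrow>
      (\<beta> k \<bullet> f (xs k) \<le> 0 \<longleftrightarrow> (\<pi> f (xs k) = s k) \<noteq> c k)"
    by metis
  have realised: "bs \<in> {map (\<lambda>k. \<beta> k \<bullet> f (xs k) \<le> 0) [0..<n] | f. f \<in> F}"
    if "length bs = n" for bs
  proof -
    obtain f where "f \<in> F"
      and f: "\<forall>k<n. \<pi> f (xs k) \<in> {s k, s' k} \<and> (\<pi> f (xs k) = s k) = (bs ! k \<noteq> c k)"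
      using realise[of "map (\<lambda>k. bs ! k \<noteq> c k) [0..<n]"] by auto
    have "map (\<lambda>k. \<beta> k \<bullet> f (xs k) \<le> 0) [0..<n] = bs"
    proof (rule nth_equalityI)
      fix k assume "k < length (map (\<lambda>k. \<beta> k \<bullet> f (xs k) \<le> 0) [0..<n])"
      then have "k < n" by simp
      with f test show "map (\<lambda>k. \<beta> k \<bullet> f (xs k) \<le> 0) [0..<n] ! k = bs ! k"
        by auto
    qed (use that in simp)
    with \<open>f \<in> F\<close> show ?thesis by blast
  qed
  have "{map (\<lambda>k. \<beta> k \<bullet> f (xs k) \<le> 0) [0..<n] | f. f \<in> F} = {bs. length bs = n}"
    using realised by (intro equalityI subsetI) auto
  then show ?thesis
    unfolding vc_ls_shatters_def by (intro exI[of _ xs] exI[of _ \<beta>] exI[of _ "\<lambda>_. 0"])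
qed

theorem theorem2:
  fixes A :: "real^'d^'m" and b :: "real^'m"
    and zs :: "(real^'d) list"
    and \<F> :: "(real^'p \<Rightarrow> real^'d) set"
  assumes "bounded (polytope_set A b)"
    and "finite {z. z extreme_point_of (polytope_set A b)}"
    and "distinct zs"
    and "set zs = {z. z extreme_point_of (polytope_set A b)}"
  shows "natarajan_dim ((\<lambda>f. plugin_policy (polytope_set A b) zs f) ` \<F>) \<le> vc_ls_dim \<F>"
proof -
  let ?Z = "polytope_set A b"
  have Z: "compact ?Z" "convex ?Z"
    using assms(1) closed_polytope_set convex_polytope_set by (auto simp: compact_eq_bounded_closed)
  have "vc_ls_shatters \<F> n" if "natarajan_shatters ((\<lambda>f. plugin_policy ?Z zs f) ` \<F>) n" for n
  proof (rule vc_ls_shatters_if_natarajan_shatters[OF that])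
    fix x s s'
    assume "s \<in> (\<lambda>f. plugin_policy ?Z zs f x) ` \<F>" "s' \<in> (\<lambda>f. plugin_policy ?Z zs f x) ` \<F>"
      and "s \<noteq> s'"
    then obtain g h where "s = plugin_policy ?Z zs g x" "s' = plugin_policy ?Z zs h x"
      by blast
    with \<open>s \<noteq> s'\<close> have "s \<in> set zs" "s' \<in> set zs"
      using plugin_policy_mem_if_nonconstant[OF Z assms(2,4)] by simp_all
    then show "\<exists>\<beta> c. \<forall>f. plugin_policy ?Z zs f x \<in> {s, s'} \<longrightarrow>
        (\<beta> \<bullet> f x \<le> 0 \<longleftrightarrow> (plugin_policy ?Z zs f x = s) \<noteq> c)"
      by (rule plugin_policy_pair_halfspace[OF Z assms(2,4) _ _ \<open>s \<noteq> s'\<close>])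
  qed
  then show ?thesis
    unfolding natarajan_dim_def vc_ls_dim_def by (intro Sup_subset_mono) blast
qed

end
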